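(* Let $G=(V,E)$ be a finite simple graph with $n$ vertices, $e$ edges, minimum degree $\delta \geq 1$, maximum degree $\Delta$, and independence number $\beta$. Then each of the following five inequalities holds, and in each of them equality holds if and only if $G$ is a regular balanced bipartite graph: [1] $$Z_1(G) \leq (n - \beta) \Delta^2 + \frac{e^2}{2 \beta} + \frac{\beta \Delta^3}{2 \delta};$$ [2] $$F(G) \geq (n - \beta) \delta^3 + \frac{\delta (2 \beta^2 \delta^2 - e^2)}{\beta};$$ [3] $$F(G) \geq (n - \beta) \delta^3 + \frac{\delta}{\beta} \left( 2 \beta \left(\beta \delta^2 + \frac{e^2}{n - \beta}\right) - e^2 - 2 \beta (n - \beta) \Delta^2\right);$$ [4] $$Inv(G) \geq \frac{n - \beta}{\Delta} + \frac{2 \beta^2 \delta^2 - e^2}{\beta \Delta^3};$$ [5] $$Inv(G) \geq \frac{n - \beta}{\Delta} + \frac{1}{\beta \Delta^3} \left( 2 \beta \left(\beta \delta^2 + \frac{e^2}{n - \beta}\right) - e^2 - 2 \beta (n - \beta) \Delta^2\right).$$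
   Context: Graphs are finite, undirected, without loops or multiple edges. $d(u)$ denotes the degree of vertex $u$; $\delta$ and $\Delta$ are the minimum and maximum degrees. The independence number $\beta$ is the maximum size of a set of pairwise nonadjacent vertices. The first Zagreb index is $Z_1(G)=\sum_{u\in V} d(u)^2$, the forgotten topological index is $F(G)=\sum_{u\in V} d(u)^3$, and (when $\delta\ge 1$) the inverse degree is $Inv(G)=\sum_{u\in V}\frac{1}{d(u)}$. A regular balanced bipartite graph is a bipartite graph whose two parts have equal size and in which all vertices have the same degree. *)

theory Defs
  imports Main "HOL-Library.Disjoint_Sets" Complex_Main
begin

definition simple_graph :: "'a set \<Rightarrow> 'a set set \<Rightarrow> bool" where
  "simple_graph V E \<longleftrightarrow> finite V \<and> (\<forall>x\<in>E. x \<subseteq> V \<and> card x = 2)"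

definition degree :: "'a set set \<Rightarrow> 'a \<Rightarrow> nat" where
  "degree E u = card {x\<in>E. u \<in> x}"

definition min_degree :: "'a set \<Rightarrow> 'a set set \<Rightarrow> nat" where
  "min_degree V E = Min (degree E ` V)"

definition max_degree :: "'a set \<Rightarrow> 'a set set \<Rightarrow> nat" where
  "max_degree V E = Max (degree E ` V)"

definition independent_set :: "'a set \<Rightarrow> 'a set set \<Rightarrow> 'a set \<Rightarrow> bool" where
  "independent_set V E S \<longleftrightarrow> S \<subseteq> V \<and> (\<forall>u\<in>S. \<forall>v\<in>S. {u, v} \<notin> E)"

definition independence_number :: "'a set \<Rightarrow> 'a set set \<Rightarrow> nat" where
  "independence_number V E = Max (card ` {S. independent_set V E S})"

definition zagreb1 :: "'a set \<Rightarrow> 'a set set \<Rightarrow> nat" where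
  "zagreb1 V E = (\<Sum>u\<in>V. degree E u ^ 2)"

definition forgotten_index :: "'a set \<Rightarrow> 'a set set \<Rightarrow> nat" where
  "forgotten_index V E = (\<Sum>u\<in>V. degree E u ^ 3)"

definition inverse_degree :: "'a set \<Rightarrow> 'a set set \<Rightarrow> real" where
  "inverse_degree V E = (\<Sum>u\<in>V. 1 / real (degree E u))"

definition regular_balanced_bipartite :: "'a set \<Rightarrow> 'a set set \<Rightarrow> bool" where
  "regular_balanced_bipartite V E \<longleftrightarrow>
     (\<exists>A B. A \<union> B = V \<and> A \<inter> B = {} \<and> card A = card B \<and>
            (\<forall>x\<in>E. \<exists>a\<in>A. \<exists>b\<in>B. x = {a, b})) \<and>
     (\<exists>k. \<forall>u\<in>V. degree E u = k)"

end

theory Submission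
  imports Defs
begin

(* Fix a maximum independent set S, so |S| = beta and |V - S| = n - beta.  Every edge has at most
   one end in S and at least one in V - S; hence beta delta <= e <= (n - beta) Delta and
   Z <= (n - beta) Delta^2 + Delta e.  Together with F >= n delta^3 and Inv >= n / Delta, each of
   the five bounds follows by writing its slack as a sum of nonnegative terms.  These all vanish
   exactly when Delta = delta and e = beta delta, and for a graph without isolated vertices this
   happens iff the graph is regular with bipartition (S, V - S) of equal sides. *)

lemma simple_graph_finite_edges:
  assumes "simple_graph V E"
  shows "finite E"
proof -
  have "E \<subseteq> Pow V" using assms by (auto simp: simple_graph_def)
  with assms show ?thesis by (auto simp: simple_graph_def intro: finite_subset)
qed

lemma sum_degree_eq_sum_card_inter:
  assumes "finite A" "finite E"
  shows "(\<Sum>u\<in>A. degree E u) = (\<Sum>x\<in>E. card (x \<inter> A))"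
proof -
  have "(\<Sum>u\<in>A. degree E u) = (\<Sum>u\<in>A. \<Sum>x\<in>E. of_bool (u \<in> x))"
    unfolding degree_def using assms
    by (intro sum.cong refl) (simp add: Int_def conj_commute)
  also have "\<dots> = (\<Sum>x\<in>E. \<Sum>u\<in>A. of_bool (u \<in> x))" by (rule sum.swap)
  also have "\<dots> = (\<Sum>x\<in>E. card (x \<inter> A))" using assms
    by (intro sum.cong refl) (simp add: Int_commute)
  finally show ?thesis .
qed

lemma sum_degree_eq_twice_card_edges:
  assumes "simple_graph V E"
  shows "(\<Sum>u\<in>V. degree E u) = 2 * card E"
proof -
  have "(\<Sum>u\<in>V. degree E u) = (\<Sum>x\<in>E. card (x \<inter> V))"
    using assms simple_graph_finite_edges
    by (intro sum_degree_eq_sum_card_inter) (auto simp: simple_graph_def)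
  also have "\<dots> = (\<Sum>x\<in>E. 2)"
    using assms by (intro sum.cong refl) (auto simp: simple_graph_def Int_absorb2)
  finally show ?thesis by simp
qed

lemma card_edge_inter_independent_set_le_1:
  assumes "simple_graph V E" "independent_set V E S" "x \<in> E"
  shows "card (x \<inter> S) \<le> 1"
proof -
  obtain a b where "x = {a, b}"
    using assms(1,3) by (auto simp: simple_graph_def card_2_iff)
  moreover have "\<not> (a \<in> S \<and> b \<in> S)"
    using assms(2,3) calculation by (auto simp: independent_set_def)
  ultimately have "x \<inter> S \<subseteq> {a} \<or> x \<inter> S \<subseteq> {b}" by blast
  then show ?thesis using card_mono[of "{_}"] by fastforce
qed

lemma independent_set_finite:
  assumes "simple_graph V E" "independent_set V E S"
  shows "finite S"
  using assms by (auto simp: simple_graph_def independent_set_def finite_subset)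

lemma sum_degree_independent_set_le_card_edges:
  assumes "simple_graph V E" "independent_set V E S"
  shows "(\<Sum>u\<in>S. degree E u) \<le> card E"
proof -
  have "(\<Sum>u\<in>S. degree E u) = (\<Sum>x\<in>E. card (x \<inter> S))"
    using assms by (simp add: sum_degree_eq_sum_card_inter independent_set_finite
        simple_graph_finite_edges)
  also have "\<dots> \<le> (\<Sum>x\<in>E. 1)"
    using card_edge_inter_independent_set_le_1[OF assms] by (rule sum_mono)
  finally show ?thesis by simp
qed

lemma edge_between_if_sum_degree_independent_set_eq_card_edges:
  assumes "simple_graph V E" "independent_set V E S"
    and "(\<Sum>u\<in>S. degree E u) = card E" and "x \<in> E"
  shows "\<exists>a\<in>S. \<exists>b\<in>V - S. x = {a, b}"
proof -
  have "(\<Sum>y\<in>E. card (y \<inter> S)) = (\<Sum>y\<in>E. 1)"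
    using assms by (simp add: sum_degree_eq_sum_card_inter independent_set_finite
        simple_graph_finite_edges)
  then have "card (x \<inter> S) = 1"
    using card_edge_inter_independent_set_le_1[OF assms(1,2)] assms(4)
      simple_graph_finite_edges[OF assms(1)] by (rule sum_mono_inv)
  then obtain c where c: "x \<inter> S = {c}" by (rule card_1_singletonE)
  obtain a b where ab: "x = {a, b}" "a \<noteq> b"
    using assms(1,4) by (auto simp: simple_graph_def card_2_iff)
  have "c \<in> {a, b}" using c ab by blast
  then obtain c' where c': "x = {c, c'}" "c' \<noteq> c" using ab by (auto simp: insert_commute)
  moreover have "x \<subseteq> V" using assms(1,4) by (auto simp: simple_graph_def)
  ultimately show ?thesis using c by blast
qed

lemma finite_independent_sets:
  assumes "finite V"
  shows "finite {S. independent_set V E S}"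
  using assms by (simp add: independent_set_def)

lemma card_le_independence_number:
  assumes "finite V" "independent_set V E S"
  shows "card S \<le> independence_number V E"
  unfolding independence_number_def
  using assms by (intro Max_ge) (auto simp: finite_independent_sets)

lemma independence_number_attained:
  assumes "finite V"
  obtains S where "independent_set V E S" "card S = independence_number V E"
proof -
  have "independent_set V E {}" by (simp add: independent_set_def)
  then have "independence_number V E \<in> card ` {S. independent_set V E S}"
    unfolding independence_number_def
    using assms by (intro Max_in) (auto simp: finite_independent_sets)
  with that show ?thesis by auto
qed

lemma independence_number_pos:
  assumes "simple_graph V E" "v \<in> V"
  shows "1 \<le> independence_number V E"
proof -
  have "independent_set V E {v}"
    using assms by (auto simp: independent_set_def simple_graph_def)
  then show ?thesis
    using card_le_independence_number assms by (fastforce simp: simple_graph_def)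
qed

lemma min_degree_le_degree:
  assumes "finite V" "u \<in> V"
  shows "min_degree V E \<le> degree E u"
  using assms by (simp add: min_degree_def)

lemma degree_le_max_degree:
  assumes "finite V" "u \<in> V"
  shows "degree E u \<le> max_degree V E"
  using assms by (simp add: max_degree_def)

lemma all_degrees_eq_iff:
  assumes "finite V" "V \<noteq> {}"
  shows "(\<forall>u\<in>V. degree E u = k) \<longleftrightarrow> min_degree V E = k \<and> max_degree V E = k"
proof
  assume "\<forall>u\<in>V. degree E u = k"
  then have "degree E ` V = {k}" using assms(2) by auto
  then show "min_degree V E = k \<and> max_degree V E = k"
    by (simp add: min_degree_def max_degree_def)
next
  assume "min_degree V E = k \<and> max_degree V E = k"
  then show "\<forall>u\<in>V. degree E u = k"
    using min_degree_le_degree degree_le_max_degree assms(1) by (metis le_antisym)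
qed

lemma card_mult_min_degree_le_card_edges:
  assumes "simple_graph V E" "independent_set V E S"
  shows "card S * min_degree V E \<le> card E"
proof -
  have "card S * min_degree V E = (\<Sum>u\<in>S. min_degree V E)" by simp
  also have "\<dots> \<le> (\<Sum>u\<in>S. degree E u)"
    using assms by (intro sum_mono min_degree_le_degree)
      (auto simp: simple_graph_def independent_set_def)
  also have "\<dots> \<le> card E" using assms by (rule sum_degree_independent_set_le_card_edges)
  finally show ?thesis .
qed

lemma card_edges_le_card_compl_mult_max_degree:
  assumes "simple_graph V E" "independent_set V E S"
  shows "card E \<le> card (V - S) * max_degree V E"
proof -
  have "2 * card E = (\<Sum>u\<in>S. degree E u) + (\<Sum>u\<in>V - S. degree E u)"
    using assms sum.subset_diff[of S V "degree E"]
    by (simp add: sum_degree_eq_twice_card_edges simple_graph_def independent_set_def)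
  then have "card E \<le> (\<Sum>u\<in>V - S. degree E u)"
    using sum_degree_independent_set_le_card_edges[OF assms] by linarith
  also have "\<dots> \<le> (\<Sum>u\<in>V - S. max_degree V E)"
    using assms(1) by (intro sum_mono degree_le_max_degree) (auto simp: simple_graph_def)
  finally show ?thesis by simp
qed

lemma zagreb1_le_independent_set:
  assumes "simple_graph V E" "independent_set V E S"
  shows "zagreb1 V E \<le> card (V - S) * max_degree V E ^ 2 + max_degree V E * card E"
proof -
  have fin: "finite V" and SV: "S \<subseteq> V"
    using assms by (auto simp: simple_graph_def independent_set_def)
  have "(\<Sum>u\<in>S. degree E u ^ 2) \<le> (\<Sum>u\<in>S. max_degree V E * degree E u)"
    using fin SV by (intro sum_mono) (auto simp: power2_eq_square degree_le_max_degree)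
  also have "\<dots> \<le> max_degree V E * card E"
    using sum_degree_independent_set_le_card_edges[OF assms]
    by (simp add: sum_distrib_left[symmetric])
  finally have S_part: "(\<Sum>u\<in>S. degree E u ^ 2) \<le> max_degree V E * card E" .
  have "(\<Sum>u\<in>V - S. degree E u ^ 2) \<le> (\<Sum>u\<in>V - S. max_degree V E ^ 2)"
    using fin by (intro sum_mono power_mono degree_le_max_degree) auto
  then have compl_part: "(\<Sum>u\<in>V - S. degree E u ^ 2) \<le> card (V - S) * max_degree V E ^ 2"
    by simp
  have "zagreb1 V E = (\<Sum>u\<in>S. degree E u ^ 2) + (\<Sum>u\<in>V - S. degree E u ^ 2)"
    using fin SV sum.subset_diff[of S V] by (simp add: zagreb1_def add.commute)
  with S_part compl_part show ?thesis by linarith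
qed

lemma twice_card_edges_regular:
  assumes "simple_graph V E" "\<forall>u\<in>V. degree E u = k"
  shows "2 * card E = card V * k"
  using sum_degree_eq_twice_card_edges[OF assms(1)] assms(2) by simp

lemma independent_set_part_of_bipartition:
  assumes "A \<subseteq> V" "A \<inter> B = {}" "\<forall>x\<in>E. \<exists>a\<in>A. \<exists>b\<in>B. x = {a, b}"
  shows "independent_set V E A"
  unfolding independent_set_def
proof (intro conjI ballI notI)
  fix u v assume "u \<in> A" "v \<in> A" "{u, v} \<in> E"
  then obtain a b where "b \<in> B" "{u, v} = {a, b}" using assms(3) by blast
  then have "b \<in> A \<inter> B" using \<open>u \<in> A\<close> \<open>v \<in> A\<close> by (auto simp: doubleton_eq_iff)
  with assms(2) show False by simp
qed (use assms(1) in simp)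

lemma regular_balanced_bipartite_degrees:
  assumes G: "simple_graph V E" and ne: "V \<noteq> {}" and "regular_balanced_bipartite V E"
  shows "max_degree V E = min_degree V E"
    and "card E = independence_number V E * min_degree V E"
proof -
  have fin: "finite V" using G by (simp add: simple_graph_def)
  obtain A B k where AB: "A \<union> B = V" "A \<inter> B = {}" "card A = card B"
      "\<forall>x\<in>E. \<exists>a\<in>A. \<exists>b\<in>B. x = {a, b}" and k: "\<forall>u\<in>V. degree E u = k"
    using assms(3) unfolding regular_balanced_bipartite_def by (elim conjE exE) (rule that)
  have min_max: "min_degree V E = k" "max_degree V E = k"
    using all_degrees_eq_iff[OF fin ne] k by auto
  then show "max_degree V E = min_degree V E" by simp
  obtain S where S: "independent_set V E S" "card S = independence_number V E"
    using independence_number_attained[OF fin] .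
  have "finite A" "finite B" using AB(1) fin by (metis finite_Un)+
  then have "card V = 2 * card A" using AB card_Un_disjoint[of A B] by simp
  then have "card E = card A * k" using twice_card_edges_regular[OF G k] by simp
  also have "\<dots> \<le> independence_number V E * k"
  proof -
    have "independent_set V E A"
      using AB by (intro independent_set_part_of_bipartition) auto
    then show ?thesis using card_le_independence_number[OF fin] by simp
  qed
  also have "\<dots> \<le> card E"
    using card_mult_min_degree_le_card_edges[OF G S(1)] S(2) min_max by simp
  finally show "card E = independence_number V E * min_degree V E"
    using min_max by simp
qed

lemma regular_balanced_bipartite_if_degrees:
  assumes G: "simple_graph V E" and ne: "V \<noteq> {}" and pos: "1 \<le> min_degree V E"
    and reg: "max_degree V E = min_degree V E"
    and edges: "card E = independence_number V E * min_degree V E"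
  shows "regular_balanced_bipartite V E"
proof -
  have fin: "finite V" using G by (simp add: simple_graph_def)
  define k where "k = min_degree V E"
  have k: "\<forall>u\<in>V. degree E u = k" using all_degrees_eq_iff[OF fin ne] reg k_def by simp
  obtain S where S: "independent_set V E S" "card S = independence_number V E"
    using independence_number_attained[OF fin] .
  have SV: "S \<subseteq> V" using S(1) by (simp add: independent_set_def)
  have card_E: "card E = card S * k" using edges S(2) k_def by simp
  \<comment> \<open>the degree sum of S is then e, so S meets every edge exactly once\<close>
  have "(\<Sum>u\<in>S. degree E u) = card S * k" using k SV by (simp add: subset_iff)
  then have between: "\<forall>x\<in>E. \<exists>a\<in>S. \<exists>b\<in>V - S. x = {a, b}"
    using edge_between_if_sum_degree_independent_set_eq_card_edges[OF G S(1)] card_E by simp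
  have "card V * k = 2 * card S * k"
    using twice_card_edges_regular[OF G k] card_E by (simp only: mult.assoc)
  moreover have "k \<noteq> 0" using pos k_def by simp
  ultimately have "card V = 2 * card S" by simp
  then have "card (V - S) = card S" using SV fin by (simp add: card_Diff_subset finite_subset)
  then have "\<exists>A B. A \<union> B = V \<and> A \<inter> B = {} \<and> card A = card B \<and>
      (\<forall>x\<in>E. \<exists>a\<in>A. \<exists>b\<in>B. x = {a, b})"
    using SV between by (intro exI[of _ S] exI[of _ "V - S"]) auto
  with k show ?thesis unfolding regular_balanced_bipartite_def by blast
qed

lemma sum_eq_card_mult_iff_all_eq:
  fixes g :: "'a \<Rightarrow> real" and c :: real
  assumes "finite A" "\<And>x. x \<in> A \<Longrightarrow> c \<le> g x"
  shows "(\<Sum>x\<in>A. g x) = card A * c \<longleftrightarrow> (\<forall>x\<in>A. g x = c)"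
proof -
  have "(\<Sum>x\<in>A. g x) - card A * c = (\<Sum>x\<in>A. g x - c)" by (simp add: sum_subtractf)
  moreover have "(\<Sum>x\<in>A. g x - c) = 0 \<longleftrightarrow> (\<forall>x\<in>A. g x - c = 0)"
    using assms by (intro sum_nonneg_eq_0_iff) auto
  ultimately show ?thesis by auto
qed

locale graph_without_isolated_vertices =
  fixes V :: "'a set" and E :: "'a set set"
  assumes simple: "simple_graph V E" and nonempty: "V \<noteq> {}"
    and min_degree_pos: "1 \<le> min_degree V E"
begin

abbreviation n :: real where "n \<equiv> real (card V)"
abbreviation e :: real where "e \<equiv> real (card E)"
abbreviation \<delta> :: real where "\<delta> \<equiv> real (min_degree V E)"
abbreviation \<Delta> :: real where "\<Delta> \<equiv> real (max_degree V E)"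
abbreviation \<beta> :: real where "\<beta> \<equiv> real (independence_number V E)"

lemma finite_vertices: "finite V"
  using simple by (simp add: simple_graph_def)

lemma delta_ge_1: "1 \<le> \<delta>"
  using min_degree_pos by simp

lemma delta_le_Delta: "\<delta> \<le> \<Delta>"
proof -
  obtain v where "v \<in> V" using nonempty by blast
  then show ?thesis
    using min_degree_le_degree degree_le_max_degree finite_vertices
    by (metis le_trans of_nat_mono)
qed

lemma beta_ge_1: "1 \<le> \<beta>"
  using independence_number_pos[OF simple] nonempty by fastforce

lemma maximum_independent_set:
  obtains S where "independent_set V E S" "real (card S) = \<beta>" "real (card (V - S)) = n - \<beta>"
proof -
  obtain S where S: "independent_set V E S" "card S = independence_number V E"
    using independence_number_attained[OF finite_vertices] .
  then have "S \<subseteq> V" by (simp add: independent_set_def)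
  then have "card (V - S) = card V - card S" "card S \<le> card V"
    using finite_vertices by (auto simp: card_Diff_subset finite_subset card_mono)
  with S that show ?thesis by simp
qed

lemma beta_delta_le_e: "\<beta> * \<delta> \<le> e"
proof -
  obtain S where "independent_set V E S" "real (card S) = \<beta>"
    using maximum_independent_set .
  with card_mult_min_degree_le_card_edges[OF simple] show ?thesis
    by (metis of_nat_mono of_nat_mult)
qed

lemma e_le_n_minus_beta_mult_Delta: "e \<le> (n - \<beta>) * \<Delta>"
proof -
  obtain S where "independent_set V E S" "real (card (V - S)) = n - \<beta>"
    using maximum_independent_set .
  with card_edges_le_card_compl_mult_max_degree[OF simple] show ?thesis
    by (metis of_nat_mono of_nat_mult)
qed

lemma zagreb1_le: "real (zagreb1 V E) \<le> (n - \<beta>) * \<Delta>^2 + \<Delta> * e"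
proof -
  obtain S where "independent_set V E S" "real (card (V - S)) = n - \<beta>"
    using maximum_independent_set .
  with zagreb1_le_independent_set[OF simple] show ?thesis
    by (metis of_nat_add of_nat_mono of_nat_mult of_nat_power)
qed

lemma n_minus_beta_pos: "0 < n - \<beta>"
proof -
  have "1 * 1 \<le> \<beta> * \<delta>" using beta_ge_1 delta_ge_1 by (intro mult_mono) auto
  then have "0 < (n - \<beta>) * \<Delta>" using beta_delta_le_e e_le_n_minus_beta_mult_Delta by linarith
  then show ?thesis using delta_ge_1 delta_le_Delta by (simp add: zero_less_mult_iff)
qed

lemma e_sq_div_n_minus_beta_le: "e^2 / (n - \<beta>) \<le> (n - \<beta>) * \<Delta>^2"
proof -
  have "e^2 \<le> ((n - \<beta>) * \<Delta>)^2" using e_le_n_minus_beta_mult_Delta by (simp add: power_mono)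
  with n_minus_beta_pos show ?thesis
    by (simp add: divide_le_eq power_mult_distrib power2_eq_square mult_ac)
qed

lemma regular_iff_Delta_eq_delta:
  "(\<forall>u\<in>V. degree E u = min_degree V E) \<longleftrightarrow> \<Delta> = \<delta>"
  "(\<forall>u\<in>V. degree E u = max_degree V E) \<longleftrightarrow> \<Delta> = \<delta>"
  using all_degrees_eq_iff[OF finite_vertices nonempty] by auto

lemma forgotten_index_ge: "n * \<delta>^3 \<le> real (forgotten_index V E)"
  and forgotten_index_eq_iff: "real (forgotten_index V E) = n * \<delta>^3 \<longleftrightarrow> \<Delta> = \<delta>"
proof -
  have F: "real (forgotten_index V E) = (\<Sum>u\<in>V. real (degree E u) ^ 3)"
    by (simp add: forgotten_index_def)
  have low: "\<delta>^3 \<le> real (degree E u) ^ 3" if "u \<in> V" for u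
    using that finite_vertices min_degree_le_degree by (simp add: power_mono)
  show "n * \<delta>^3 \<le> real (forgotten_index V E)"
    unfolding F using sum_bounded_below[of V "\<delta>^3"] low by simp
  have "real (forgotten_index V E) = n * \<delta>^3 \<longleftrightarrow> (\<forall>u\<in>V. real (degree E u) ^ 3 = \<delta>^3)"
    unfolding F by (rule sum_eq_card_mult_iff_all_eq[OF finite_vertices low])
  also have "\<dots> \<longleftrightarrow> (\<forall>u\<in>V. degree E u = min_degree V E)"
    by (simp add: power_eq_iff_eq_base)
  finally show "real (forgotten_index V E) = n * \<delta>^3 \<longleftrightarrow> \<Delta> = \<delta>"
    using regular_iff_Delta_eq_delta(1) by simp
qed

lemma degree_pos: "u \<in> V \<Longrightarrow> 0 < degree E u"
  using min_degree_le_degree[OF finite_vertices] min_degree_pos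
  by (metis le_trans not_one_le_zero not_gr0)

lemma inverse_degree_ge: "n / \<Delta> \<le> inverse_degree V E"
  and inverse_degree_eq_iff: "inverse_degree V E = n / \<Delta> \<longleftrightarrow> \<Delta> = \<delta>"
proof -
  have low: "1 / \<Delta> \<le> 1 / real (degree E u)" if "u \<in> V" for u
    using that degree_pos degree_le_max_degree[OF finite_vertices] by (simp add: frac_le)
  show "n / \<Delta> \<le> inverse_degree V E"
    unfolding inverse_degree_def using sum_bounded_below[of V "1 / \<Delta>"] low by simp
  have "inverse_degree V E = n * (1 / \<Delta>) \<longleftrightarrow> (\<forall>u\<in>V. 1 / real (degree E u) = 1 / \<Delta>)"
    unfolding inverse_degree_def by (rule sum_eq_card_mult_iff_all_eq[OF finite_vertices low])
  also have "\<dots> \<longleftrightarrow> (\<forall>u\<in>V. degree E u = max_degree V E)"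
    by simp
  finally show "inverse_degree V E = n / \<Delta> \<longleftrightarrow> \<Delta> = \<delta>"
    using regular_iff_Delta_eq_delta(2) by simp
qed

lemma regular_balanced_bipartite_iff_degrees:
  "regular_balanced_bipartite V E \<longleftrightarrow> \<Delta> = \<delta> \<and> e = \<beta> * \<delta>"
  using regular_balanced_bipartite_degrees[OF simple nonempty]
    regular_balanced_bipartite_if_degrees[OF simple nonempty min_degree_pos]
  by (metis of_nat_eq_iff of_nat_mult)

lemma regular_balanced_bipartite_parameters:
  assumes "regular_balanced_bipartite V E"
  shows "\<Delta> = \<delta>" "e = \<beta> * \<delta>" "n = 2 * \<beta>" "real (zagreb1 V E) = n * \<delta>^2"
proof -
  show Delta: "\<Delta> = \<delta>" and e: "e = \<beta> * \<delta>"
    using assms regular_balanced_bipartite_iff_degrees by simp_all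
  have reg: "\<forall>u\<in>V. degree E u = min_degree V E"
    using Delta regular_iff_Delta_eq_delta(1) by simp
  have "n * \<delta> = 2 * \<beta> * \<delta>"
    using twice_card_edges_regular[OF simple reg] e by (metis mult.assoc of_nat_mult of_nat_numeral)
  then show "n = 2 * \<beta>" using delta_ge_1 by simp
  show "real (zagreb1 V E) = n * \<delta>^2" using reg by (simp add: zagreb1_def)
qed

lemma zagreb1_upper_bound:
  "real (zagreb1 V E) \<le> (n - \<beta>) * \<Delta>^2 + e^2 / (2 * \<beta>) + \<beta> * \<Delta>^3 / (2 * \<delta>) \<and>
   (real (zagreb1 V E) = (n - \<beta>) * \<Delta>^2 + e^2 / (2 * \<beta>) + \<beta> * \<Delta>^3 / (2 * \<delta>)
      \<longleftrightarrow> regular_balanced_bipartite V E)"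
  (is "?Z \<le> ?B \<and> (?Z = ?B \<longleftrightarrow> ?R)")
proof -
  \<comment> \<open>AM-GM for \<open>\<Delta> * e\<close>, plus \<open>\<Delta>^2 \<le> \<Delta>^3 / \<delta>\<close>\<close>
  have gap: "?B - ((n - \<beta>) * \<Delta>^2 + \<Delta> * e)
      = (e - \<beta> * \<Delta>)^2 / (2 * \<beta>) + \<beta> * \<Delta>^2 * (\<Delta> - \<delta>) / (2 * \<delta>)"
    using beta_ge_1 delta_ge_1 by (simp add: field_simps power2_eq_square power3_eq_cube)
  have sq: "0 \<le> (e - \<beta> * \<Delta>)^2 / (2 * \<beta>)" using beta_ge_1 by simp
  have dev: "0 \<le> \<beta> * \<Delta>^2 * (\<Delta> - \<delta>) / (2 * \<delta>)"
    using beta_ge_1 delta_ge_1 delta_le_Delta by simp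
  show ?thesis
  proof (intro conjI iffI)
    show "?Z \<le> ?B" using gap sq dev zagreb1_le by linarith
  next
    assume "?Z = ?B"
    then have "(e - \<beta> * \<Delta>)^2 / (2 * \<beta>) = 0" "\<beta> * \<Delta>^2 * (\<Delta> - \<delta>) / (2 * \<delta>) = 0"
      using gap sq dev zagreb1_le by linarith+
    then have "e = \<beta> * \<Delta>" "\<Delta> = \<delta>" using beta_ge_1 delta_ge_1 delta_le_Delta by auto
    then show ?R using regular_balanced_bipartite_iff_degrees by simp
  next
    assume ?R
    then show "?Z = ?B"
      using regular_balanced_bipartite_parameters[OF \<open>?R\<close>] beta_ge_1 delta_ge_1
      by (simp add: field_simps power2_eq_square power3_eq_cube)
  qed
qed

lemma forgotten_index_lower_bound:
  "(n - \<beta>) * \<delta>^3 + \<delta> * (2 * \<beta>^2 * \<delta>^2 - e^2) / \<beta> \<le> real (forgotten_index V E) \<and>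
   (real (forgotten_index V E) = (n - \<beta>) * \<delta>^3 + \<delta> * (2 * \<beta>^2 * \<delta>^2 - e^2) / \<beta>
      \<longleftrightarrow> regular_balanced_bipartite V E)"
  (is "?B \<le> ?F \<and> (?F = ?B \<longleftrightarrow> ?R)")
proof -
  have gap: "n * \<delta>^3 - ?B = \<delta> * (e^2 - (\<beta> * \<delta>)^2) / \<beta>"
    using beta_ge_1 by (simp add: field_simps power2_eq_square power3_eq_cube)
  have "(\<beta> * \<delta>)^2 \<le> e^2"
    using beta_delta_le_e beta_ge_1 delta_ge_1 by (intro power_mono) auto
  then have nonneg: "0 \<le> \<delta> * (e^2 - (\<beta> * \<delta>)^2) / \<beta>"
    using beta_ge_1 delta_ge_1 by simp
  show ?thesis
  proof (intro conjI iffI)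
    show "?B \<le> ?F" using gap nonneg forgotten_index_ge by linarith
  next
    assume "?F = ?B"
    then have "?F = n * \<delta>^3" "\<delta> * (e^2 - (\<beta> * \<delta>)^2) / \<beta> = 0"
      using gap nonneg forgotten_index_ge by linarith+
    then have "\<Delta> = \<delta>" "e^2 = (\<beta> * \<delta>)^2"
      using forgotten_index_eq_iff beta_ge_1 delta_ge_1 by auto
    moreover have "e = \<beta> * \<delta>"
      using \<open>e^2 = (\<beta> * \<delta>)^2\<close> beta_ge_1 delta_ge_1 by simp
    ultimately show ?R using regular_balanced_bipartite_iff_degrees by simp
  next
    assume ?R
    then show "?F = ?B"
      using regular_balanced_bipartite_parameters[OF \<open>?R\<close>] forgotten_index_eq_iff beta_ge_1
      by (simp add: field_simps power2_eq_square power3_eq_cube)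
  qed
qed

lemma forgotten_index_lower_bound':
  "(n - \<beta>) * \<delta>^3 + (\<delta> / \<beta>) * (2 * \<beta> * (\<beta> * \<delta>^2 + e^2 / (n - \<beta>)) - e^2
      - 2 * \<beta> * (n - \<beta>) * \<Delta>^2) \<le> real (forgotten_index V E) \<and>
   (real (forgotten_index V E) = (n - \<beta>) * \<delta>^3 + (\<delta> / \<beta>) * (2 * \<beta> * (\<beta> * \<delta>^2
      + e^2 / (n - \<beta>)) - e^2 - 2 * \<beta> * (n - \<beta>) * \<Delta>^2)
      \<longleftrightarrow> regular_balanced_bipartite V E)"
  (is "?B \<le> ?F \<and> (?F = ?B \<longleftrightarrow> ?R)")
proof -
  let ?B2 = "(n - \<beta>) * \<delta>^3 + \<delta> * (2 * \<beta>^2 * \<delta>^2 - e^2) / \<beta>"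
  have gap: "?B2 - ?B = 2 * \<delta> * ((n - \<beta>) * \<Delta>^2 - e^2 / (n - \<beta>))"
    using beta_ge_1 by (simp add: field_simps power2_eq_square)
  have nonneg: "0 \<le> 2 * \<delta> * ((n - \<beta>) * \<Delta>^2 - e^2 / (n - \<beta>))"
    using e_sq_div_n_minus_beta_le delta_ge_1 by simp
  show ?thesis
  proof (intro conjI iffI)
    show "?B \<le> ?F" using gap nonneg forgotten_index_lower_bound by linarith
  next
    assume "?F = ?B"
    then have "?F = ?B2" using gap nonneg forgotten_index_lower_bound by linarith
    then show ?R using forgotten_index_lower_bound by blast
  next
    assume ?R
    then show "?F = ?B"
      using regular_balanced_bipartite_parameters[OF \<open>?R\<close>] forgotten_index_eq_iff beta_ge_1
      by (simp add: field_simps power2_eq_square power3_eq_cube)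
  qed
qed

lemma inverse_degree_lower_bound:
  "(n - \<beta>) / \<Delta> + (2 * \<beta>^2 * \<delta>^2 - e^2) / (\<beta> * \<Delta>^3) \<le> inverse_degree V E \<and>
   (inverse_degree V E = (n - \<beta>) / \<Delta> + (2 * \<beta>^2 * \<delta>^2 - e^2) / (\<beta> * \<Delta>^3)
      \<longleftrightarrow> regular_balanced_bipartite V E)"
  (is "?B \<le> ?I \<and> (?I = ?B \<longleftrightarrow> ?R)")
proof -
  have Delta_pos: "0 < \<Delta>" using delta_ge_1 delta_le_Delta by linarith
  have gap: "n / \<Delta> - ?B = (\<beta>^2 * (\<Delta>^2 - \<delta>^2) + (e^2 - (\<beta> * \<delta>)^2)) / (\<beta> * \<Delta>^3)"
    using beta_ge_1 Delta_pos by (simp add: field_simps power2_eq_square power3_eq_cube)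
  have "\<delta>^2 \<le> \<Delta>^2" using delta_ge_1 delta_le_Delta by (intro power_mono) auto
  moreover have "(\<beta> * \<delta>)^2 \<le> e^2"
    using beta_delta_le_e beta_ge_1 delta_ge_1 by (intro power_mono) auto
  ultimately have num: "0 \<le> \<beta>^2 * (\<Delta>^2 - \<delta>^2)" "0 \<le> e^2 - (\<beta> * \<delta>)^2" by simp_all
  then have nonneg: "0 \<le> (\<beta>^2 * (\<Delta>^2 - \<delta>^2) + (e^2 - (\<beta> * \<delta>)^2)) / (\<beta> * \<Delta>^3)"
    using beta_ge_1 Delta_pos by simp
  show ?thesis
  proof (intro conjI iffI)
    show "?B \<le> ?I" using gap nonneg inverse_degree_ge by linarith
  next
    assume "?I = ?B"
    then have "?I = n / \<Delta>"
      and "(\<beta>^2 * (\<Delta>^2 - \<delta>^2) + (e^2 - (\<beta> * \<delta>)^2)) / (\<beta> * \<Delta>^3) = 0"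
      using gap nonneg inverse_degree_ge by linarith+
    then have "\<Delta> = \<delta>" "e^2 = (\<beta> * \<delta>)^2"
      using inverse_degree_eq_iff num beta_ge_1 Delta_pos by auto
    moreover have "e = \<beta> * \<delta>"
      using \<open>e^2 = (\<beta> * \<delta>)^2\<close> beta_ge_1 delta_ge_1 by simp
    ultimately show ?R using regular_balanced_bipartite_iff_degrees by simp
  next
    assume ?R
    then show "?I = ?B"
      using regular_balanced_bipartite_parameters[OF \<open>?R\<close>] inverse_degree_eq_iff beta_ge_1 delta_ge_1
      by (simp add: field_simps power2_eq_square power3_eq_cube)
  qed
qed

lemma inverse_degree_lower_bound':
  "(n - \<beta>) / \<Delta> + (1 / (\<beta> * \<Delta>^3)) * (2 * \<beta> * (\<beta> * \<delta>^2 + e^2 / (n - \<beta>)) - e^2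
      - 2 * \<beta> * (n - \<beta>) * \<Delta>^2) \<le> inverse_degree V E \<and>
   (inverse_degree V E = (n - \<beta>) / \<Delta> + (1 / (\<beta> * \<Delta>^3)) * (2 * \<beta> * (\<beta> * \<delta>^2
      + e^2 / (n - \<beta>)) - e^2 - 2 * \<beta> * (n - \<beta>) * \<Delta>^2)
      \<longleftrightarrow> regular_balanced_bipartite V E)"
  (is "?B \<le> ?I \<and> (?I = ?B \<longleftrightarrow> ?R)")
proof -
  let ?B4 = "(n - \<beta>) / \<Delta> + (2 * \<beta>^2 * \<delta>^2 - e^2) / (\<beta> * \<Delta>^3)"
  have Delta_pos: "0 < \<Delta>" using delta_ge_1 delta_le_Delta by linarith
  have gap: "?B4 - ?B = 2 * ((n - \<beta>) * \<Delta>^2 - e^2 / (n - \<beta>)) / \<Delta>^3"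
    using beta_ge_1 Delta_pos by (simp add: field_simps power2_eq_square)
  have nonneg: "0 \<le> 2 * ((n - \<beta>) * \<Delta>^2 - e^2 / (n - \<beta>)) / \<Delta>^3"
    using e_sq_div_n_minus_beta_le Delta_pos by simp
  show ?thesis
  proof (intro conjI iffI)
    show "?B \<le> ?I" using gap nonneg inverse_degree_lower_bound by linarith
  next
    assume "?I = ?B"
    then have "?I = ?B4" using gap nonneg inverse_degree_lower_bound by linarith
    then show ?R using inverse_degree_lower_bound by blast
  next
    assume ?R
    then show "?I = ?B"
      using regular_balanced_bipartite_parameters[OF \<open>?R\<close>] inverse_degree_eq_iff beta_ge_1 delta_ge_1
      by (simp add: field_simps power2_eq_square power3_eq_cube)
  qed
qed

end

theorem theorem1:
  fixes V :: "'a set" and E :: "'a set set"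
  assumes G: "simple_graph V E" and ne: "V \<noteq> {}"
    and dpos: "min_degree V E \<ge> 1"
  defines "n \<equiv> real (card V)" and "e \<equiv> real (card E)"
    and "\<delta> \<equiv> real (min_degree V E)" and "\<Delta> \<equiv> real (max_degree V E)"
    and "\<beta> \<equiv> real (independence_number V E)"
    and "Z \<equiv> real (zagreb1 V E)" and "F \<equiv> real (forgotten_index V E)"
    and "I \<equiv> inverse_degree V E"
    and "R \<equiv> regular_balanced_bipartite V E"
  shows
   "(Z \<le> (n - \<beta>) * \<Delta>^2 + e^2 / (2 * \<beta>) + \<beta> * \<Delta>^3 / (2 * \<delta>) \<and>
     (Z = (n - \<beta>) * \<Delta>^2 + e^2 / (2 * \<beta>) + \<beta> * \<Delta>^3 / (2 * \<delta>) \<longleftrightarrow> R))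
  \<and> (F \<ge> (n - \<beta>) * \<delta>^3 + \<delta> * (2 * \<beta>^2 * \<delta>^2 - e^2) / \<beta> \<and>
     (F = (n - \<beta>) * \<delta>^3 + \<delta> * (2 * \<beta>^2 * \<delta>^2 - e^2) / \<beta> \<longleftrightarrow> R))
  \<and> (F \<ge> (n - \<beta>) * \<delta>^3 + (\<delta> / \<beta>) * (2 * \<beta> * (\<beta> * \<delta>^2 + e^2 / (n - \<beta>)) - e^2
                                    - 2 * \<beta> * (n - \<beta>) * \<Delta>^2) \<and>
     (F = (n - \<beta>) * \<delta>^3 + (\<delta> / \<beta>) * (2 * \<beta> * (\<beta> * \<delta>^2 + e^2 / (n - \<beta>)) - e^2
                                    - 2 * \<beta> * (n - \<beta>) * \<Delta>^2) \<longleftrightarrow> R))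
  \<and> (I \<ge> (n - \<beta>) / \<Delta> + (2 * \<beta>^2 * \<delta>^2 - e^2) / (\<beta> * \<Delta>^3) \<and>
     (I = (n - \<beta>) / \<Delta> + (2 * \<beta>^2 * \<delta>^2 - e^2) / (\<beta> * \<Delta>^3) \<longleftrightarrow> R))
  \<and> (I \<ge> (n - \<beta>) / \<Delta> + (1 / (\<beta> * \<Delta>^3)) * (2 * \<beta> * (\<beta> * \<delta>^2 + e^2 / (n - \<beta>)) - e^2
                                    - 2 * \<beta> * (n - \<beta>) * \<Delta>^2) \<and>
     (I = (n - \<beta>) / \<Delta> + (1 / (\<beta> * \<Delta>^3)) * (2 * \<beta> * (\<beta> * \<delta>^2 + e^2 / (n - \<beta>)) - e^2
                                    - 2 * \<beta> * (n - \<beta>) * \<Delta>^2) \<longleftrightarrow> R))"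
proof -
  interpret G: graph_without_isolated_vertices V E
    by (rule graph_without_isolated_vertices.intro[OF G ne dpos])
  show ?thesis
    unfolding n_def e_def \<delta>_def \<Delta>_def \<beta>_def Z_def F_def I_def R_def
    using G.zagreb1_upper_bound G.forgotten_index_lower_bound G.forgotten_index_lower_bound'
      G.inverse_degree_lower_bound G.inverse_degree_lower_bound'
    by blast
qed

end
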